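(* Let $G(\mathcal V,\mathcal E)$ be a finite simple directed graph and $f\ge 0$ an integer, and assume Condition 1 holds for $G$. Let $F\subset\mathcal V$ and $F_1\subset\mathcal V-F$ with $|F|\le f$ and $|F_1|\le f$, and let $S$ be the set of nodes of a source component of the reduced graph $G_{F,F_1}$. Then $S \Rightarrow_{\mathcal V - F} \mathcal V-F-S$.
   Context: For disjoint sets $X,Y\subseteq\mathcal V$ with $Y$ non-empty, $X\rightarrow Y$ means that $X$ contains at least $f+1$ distinct nodes $i$ such that $(i,j)\in\mathcal E$ for some $j\in Y$. Condition 1: for every partition $L,C,R,F$ of $\mathcal V$ (with $C$ or $F$ possibly empty) such that $L,R$ are non-empty and $|F|\le f$, either $L\cup C\rightarrow R$ or $R\cup C\rightarrow L$. Reduced graph: $G_{F,F_1}$ has vertex set $\mathcal V-F$ and edge set $\mathcal E-\{(i,j): i\in F \text{ or } j\in F\}-\{(i,j): i\in F_1\}$ (all edges incident to $F$ and all outgoing edges of nodes in $F_1$ are removed). A directed graph $H$ is partitioned into strongly connected components $H_1,\dots,H_h$ (nodes $i,j$ lie in the same $H_k$ iff there are $(i,j)$- and $(j,i)$-paths using only nodes of $H_k$); the condensation $H^d$ has a vertex $c_k$ per component and an edge $c_k\to c_l$ iff nodes of $H_k$ have directed paths in $H$ to nodes of $H_l$. A component $H_k$ is a source component if $c_k$ is not reachable from any other vertex of $H^d$. An $(X,y)$-path is a directed path (in $G$) from some node of $X$ to the node $y\notin X$; it excludes $F$ if it contains no node of $F$; $(X,y)$-paths are disjoint if they pairwise share only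 $y$. For pairwise disjoint $X,Y,F$ with $|F|\le f$, $X \Rightarrow_{\mathcal V - F} Y$ means: $Y=\emptyset$, or every $y\in Y$ has at least $f+1$ pairwise disjoint $(X,y)$-paths excluding $F$. *)

theory Defs
  imports Main
begin

definition simple_digraph :: "'a set \<Rightarrow> ('a \<times> 'a) set \<Rightarrow> bool" where
  "simple_digraph V E \<longleftrightarrow> finite V \<and> E \<subseteq> V \<times> V \<and> (\<forall>i. (i, i) \<notin> E)"

definition reaches :: "('a \<times> 'a) set \<Rightarrow> nat \<Rightarrow> 'a set \<Rightarrow> 'a set \<Rightarrow> bool" where
  "reaches E f X Y \<longleftrightarrow> card {i \<in> X. \<exists>j \<in> Y. (i, j) \<in> E} \<ge> f + 1"

definition condition1 :: "'a set \<Rightarrow> ('a \<times> 'a) set \<Rightarrow> nat \<Rightarrow> bool" where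
  "condition1 V E f \<longleftrightarrow>
     (\<forall>L C R F. L \<union> C \<union> R \<union> F = V \<and>
        L \<inter> C = {} \<and> L \<inter> R = {} \<and> L \<inter> F = {} \<and> C \<inter> R = {} \<and> C \<inter> F = {} \<and> R \<inter> F = {} \<and>
        L \<noteq> {} \<and> R \<noteq> {} \<and> card F \<le> f
        \<longrightarrow> reaches E f (L \<union> C) R \<or> reaches E f (R \<union> C) L)"

definition reduced_vertices :: "'a set \<Rightarrow> 'a set \<Rightarrow> 'a set" where
  "reduced_vertices V F = V - F"

definition reduced_edges :: "('a \<times> 'a) set \<Rightarrow> 'a set \<Rightarrow> 'a set \<Rightarrow> ('a \<times> 'a) set" where
  "reduced_edges E F F1 = E - {(i, j). i \<in> F \<or> j \<in> F} - {(i, j). i \<in> F1}"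

definition scc :: "'a set \<Rightarrow> ('a \<times> 'a) set \<Rightarrow> 'a set \<Rightarrow> bool" where
  "scc VH EH S \<longleftrightarrow> (\<exists>i \<in> VH. S = {j \<in> VH. (i, j) \<in> EH\<^sup>* \<and> (j, i) \<in> EH\<^sup>*})"

definition source_component :: "'a set \<Rightarrow> ('a \<times> 'a) set \<Rightarrow> 'a set \<Rightarrow> bool" where
  "source_component VH EH S \<longleftrightarrow> scc VH EH S \<and>
     (\<forall>u \<in> VH - S. \<forall>v \<in> S. (u, v) \<notin> EH\<^sup>*)"

definition is_path :: "'a set \<Rightarrow> ('a \<times> 'a) set \<Rightarrow> 'a list \<Rightarrow> bool" where
  "is_path V E p \<longleftrightarrow> p \<noteq> [] \<and> distinct p \<and> set p \<subseteq> V \<and>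
     (\<forall>k. Suc k < length p \<longrightarrow> (p ! k, p ! Suc k) \<in> E)"

definition Xy_path_excl :: "'a set \<Rightarrow> ('a \<times> 'a) set \<Rightarrow> 'a set \<Rightarrow> 'a \<Rightarrow> 'a set \<Rightarrow> 'a list \<Rightarrow> bool" where
  "Xy_path_excl V E X y F p \<longleftrightarrow> y \<notin> X \<and> is_path V E p \<and> hd p \<in> X \<and> last p = y \<and>
     set p \<inter> F = {}"

definition robust_reach :: "'a set \<Rightarrow> ('a \<times> 'a) set \<Rightarrow> nat \<Rightarrow> 'a set \<Rightarrow> 'a set \<Rightarrow> 'a set \<Rightarrow> bool" where
  "robust_reach V E f F X Y \<longleftrightarrow> Y = {} \<or>
     (\<forall>y \<in> Y. \<exists>P. finite P \<and> card P \<ge> f + 1 \<and> (\<forall>p \<in> P. Xy_path_excl V E X y F p) \<and>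
        (\<forall>p \<in> P. \<forall>q \<in> P. p \<noteq> q \<longrightarrow> set p \<inter> set q = {y}))"

end

theory Submission
  imports Defs
begin

text \<open>Fix y outside S. By Menger's theorem it suffices that every set W separating S from the
  in-neighbours of y in G - F - y has more than f nodes. Otherwise let R consist of y and the nodes
  that reach an in-neighbour of y in G - F - W - y, and apply Condition 1 to the partition S, C, R, F
  with C the remaining nodes: every node of S \<union> C with an edge into R lies in W, and, S being
  a source component of G_{F,F1}, every node outside S with an edge into S lies in F1. Both sets
  have at most f nodes. The f + 1 disjoint paths into the in-neighbours of y are finally extended
  by y.\<close>

section \<open>Paths\<close>

lemma is_path_Cons:
  "is_path V E (a # p) \<longleftrightarrow>
     a \<in> V \<and> a \<notin> set p \<and> (p = [] \<or> is_path V E p \<and> (a, hd p) \<in> E)"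
proof -
  have "(\<forall>k. Suc k < length (a # p) \<longrightarrow> ((a # p) ! k, (a # p) ! Suc k) \<in> E) \<longleftrightarrow>
        (p \<noteq> [] \<longrightarrow> (a, hd p) \<in> E) \<and> (\<forall>k. Suc k < length p \<longrightarrow> (p ! k, p ! Suc k) \<in> E)"
    by (cases p) (auto simp: All_less_Suc2 less_Suc_eq_0_disj)
  then show ?thesis
    unfolding is_path_def by auto
qed

lemma is_path_append:
  assumes "p \<noteq> []" "q \<noteq> []"
  shows "is_path V E (p @ q) \<longleftrightarrow>
    is_path V E p \<and> is_path V E q \<and> set p \<inter> set q = {} \<and> (last p, hd q) \<in> E"
  using assms(1)
proof (induction p)
  case (Cons a p)
  with assms(2) show ?case
    by (cases "p = []") (auto simp: is_path_Cons)
qed simp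

lemma is_path_take_drop:
  assumes "is_path V E p"
  shows "0 < n \<Longrightarrow> is_path V E (take n p)" and "n < length p \<Longrightarrow> is_path V E (drop n p)"
proof -
  have cases: "is_path V E (take n p) \<and> is_path V E (drop n p)" if "0 < n" "n < length p"
    using assms is_path_append[of "take n p" "drop n p" V E] that by (auto simp: is_path_def)
  show "0 < n \<Longrightarrow> is_path V E (take n p)"
    using cases assms by (cases "n < length p") auto
  show "n < length p \<Longrightarrow> is_path V E (drop n p)"
    using cases assms by (cases "n = 0") auto
qed

lemma is_path_rev: "is_path V (E\<inverse>) (rev p) \<longleftrightarrow> is_path V E p"
proof (induction p)
  case (Cons a p)
  show ?case
    by (cases "p = []") (auto simp: is_path_Cons is_path_append Cons last_rev)
qed (simp add: is_path_def)

lemma is_path_mono: "is_path V E p \<Longrightarrow> V \<subseteq> V' \<Longrightarrow> E \<subseteq> E' \<Longrightarrow> is_path V' E' p"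
  unfolding is_path_def by blast

lemma is_path_rtrancl: "is_path V E p \<Longrightarrow> (hd p, last p) \<in> (E \<inter> set p \<times> set p)\<^sup>*"
proof (induction p)
  case (Cons a p)
  show ?case
  proof (cases "p = []")
    case False
    with Cons have "(hd p, last p) \<in> (E \<inter> set (a # p) \<times> set (a # p))\<^sup>*"
      by (auto simp: is_path_Cons elim: rtrancl_mono[THEN subsetD, rotated])
    moreover have "(a, hd p) \<in> E \<inter> set (a # p) \<times> set (a # p)"
      using Cons.prems False by (auto simp: is_path_Cons)
    ultimately have "(a, last p) \<in> (E \<inter> set (a # p) \<times> set (a # p))\<^sup>*"
      by (rule converse_rtrancl_into_rtrancl[rotated])
    with False show ?thesis
      by (metis last_ConsR list.sel(1))
  qed simp
qed (simp add: is_path_def)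

lemma rtrancl_is_path:
  assumes "(a, b) \<in> (E \<inter> X \<times> X)\<^sup>*" "a \<in> X" "X \<subseteq> V"
  shows "\<exists>p. is_path V E p \<and> hd p = a \<and> last p = b \<and> set p \<subseteq> X"
  using assms(1,2)
proof (induction rule: converse_rtrancl_induct)
  case base
  with assms(3) show ?case
    by (intro exI[of _ "[b]"]) (auto simp: is_path_def)
next
  case (step a a')
  then obtain p where p: "is_path V E p" "hd p = a'" "last p = b" "set p \<subseteq> X"
    by blast
  show ?case
  proof (cases "a \<in> set p")
    case True
    then obtain ys zs where "p = ys @ a # zs"
      by (meson split_list)
    with p show ?thesis
      using is_path_take_drop(2)[OF p(1), of "length ys"]
      by (intro exI[of _ "a # zs"]) auto
  next
    case False
    moreover have "p \<noteq> []"
      using p(1) by (simp add: is_path_def)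
    ultimately show ?thesis
      using p step assms(3) by (intro exI[of _ "a # p"]) (auto simp: is_path_Cons)
  qed
qed

lemma is_path_restrict_sources:
  "is_path V E p \<Longrightarrow> set (butlast p) \<inter> X = {} \<Longrightarrow> is_path V {(u, w) \<in> E. u \<notin> X} p"
proof (induction p)
  case (Cons a p)
  then show ?case
    by (cases "p = []") (auto simp: is_path_Cons)
qed (simp add: is_path_def)

lemma is_path_first_entry:
  assumes "is_path V E p" "set p \<inter> X \<noteq> {}"
  obtains q where "is_path V {(u, w) \<in> E. u \<notin> X} q" "hd q = hd p" "last q \<in> X"
    "set q \<subseteq> set p" "set (butlast q) \<inter> X = {}"
proof -
  obtain ys x zs where p: "p = ys @ x # zs" "x \<in> X" "\<forall>y \<in> set ys. y \<notin> X"
    using split_list_first_prop[of p "\<lambda>x. x \<in> X"] assms(2) by blast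
  have "is_path V E (ys @ [x])"
    using is_path_take_drop(1)[OF assms(1), of "Suc (length ys)"] p(1) by simp
  then have "is_path V {(u, w) \<in> E. u \<notin> X} (ys @ [x])"
    using p(3) by (auto intro: is_path_restrict_sources)
  then show ?thesis
    by (rule that) (use p in \<open>auto simp: hd_append\<close>)
qed

section \<open>Menger's theorem\<close>

definition ab_path :: "'a set \<Rightarrow> ('a \<times> 'a) set \<Rightarrow> 'a set \<Rightarrow> 'a set \<Rightarrow> 'a list \<Rightarrow> bool" where
  "ab_path V E A B p \<longleftrightarrow> is_path V E p \<and> hd p \<in> A \<and> last p \<in> B"

definition separates :: "'a set \<Rightarrow> ('a \<times> 'a) set \<Rightarrow> 'a set \<Rightarrow> 'a set \<Rightarrow> 'a set \<Rightarrow> bool" where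
  "separates V E A B W \<longleftrightarrow> (\<forall>p. ab_path V E A B p \<longrightarrow> set p \<inter> W \<noteq> {})"

definition disjoint_paths :: "'a list set \<Rightarrow> bool" where
  "disjoint_paths P \<longleftrightarrow> pairwise (\<lambda>p q. set p \<inter> set q = {}) P"

definition separators_at_least :: "'a set \<Rightarrow> ('a \<times> 'a) set \<Rightarrow> 'a set \<Rightarrow> 'a set \<Rightarrow> nat \<Rightarrow> bool" where
  "separators_at_least V E A B k \<longleftrightarrow> (\<forall>W. finite W \<longrightarrow> separates V E A B W \<longrightarrow> k \<le> card W)"

definition has_disjoint_paths :: "'a set \<Rightarrow> ('a \<times> 'a) set \<Rightarrow> 'a set \<Rightarrow> 'a set \<Rightarrow> nat \<Rightarrow> bool" where
  "has_disjoint_paths V E A B k \<longleftrightarrow>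
     (\<exists>P. finite P \<and> card P = k \<and> (\<forall>p\<in>P. ab_path V E A B p) \<and> disjoint_paths P)"

lemma ab_path_mono: "ab_path V E A B p \<Longrightarrow> E \<subseteq> E' \<Longrightarrow> ab_path V E' A B p"
  unfolding ab_path_def using is_path_mono by blast

lemma ab_path_rev: "ab_path V (E\<inverse>) B A (rev p) \<longleftrightarrow> ab_path V E A B p"
  unfolding ab_path_def is_path_rev
  by (cases "p = []") (auto simp: hd_rev last_rev is_path_def)

lemma ab_path_rev_converse: "ab_path V E A B (rev p) \<longleftrightarrow> ab_path V (E\<inverse>) B A p"
  using ab_path_rev[where A = A and B = B and p = "rev p"] by simp

lemma separates_converse: "separates V (E\<inverse>) B A W \<longleftrightarrow> separates V E A B W"
proof -
  have "separates V E A B W" if "separates V (E\<inverse>) B A W" for E :: "('a \<times> 'a) set" and A B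
    unfolding separates_def
  proof (intro allI impI)
    fix p assume "ab_path V E A B p"
    then have "ab_path V (E\<inverse>) B A (rev p)"
      by (simp add: ab_path_rev)
    with that show "set p \<inter> W \<noteq> {}"
      unfolding separates_def by fastforce
  qed
  from this[where E = E and A = A and B = B] this[where E = "E\<inverse>" and A = B and B = A, simplified]
  show ?thesis
    by blast
qed

lemma disjoint_paths_rev: "disjoint_paths (rev ` P) \<longleftrightarrow> disjoint_paths P"
  unfolding disjoint_paths_def pairwise_image by (simp add: pairwise_def)

lemma has_disjoint_paths_converse:
  "has_disjoint_paths V (E\<inverse>) B A k \<longleftrightarrow> has_disjoint_paths V E A B k"
proof -
  have "has_disjoint_paths V E A B k" if paths: "has_disjoint_paths V (E\<inverse>) B A k" for E :: "('a \<times> 'a) set"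
    and A B
  proof -
    obtain P where P: "finite P" "card P = k" "\<forall>p\<in>P. ab_path V (E\<inverse>) B A p" "disjoint_paths P"
      using paths unfolding has_disjoint_paths_def by blast
    have "ab_path V E A B (rev p)" if "p \<in> P" for p
      using P(3) that by (simp add: ab_path_rev_converse)
    then have "\<forall>p\<in>rev ` P. ab_path V E A B p"
      by blast
    with P show ?thesis
      unfolding has_disjoint_paths_def
      by (intro exI[of _ "rev ` P"]) (auto simp: disjoint_paths_rev card_image)
  qed
  from this[where E = E and A = A and B = B] this[where E = "E\<inverse>" and A = B and B = A, simplified]
  show ?thesis
    by blast
qed

lemma disjoint_paths_inj_on:
  assumes "disjoint_paths P" "\<And>p. p \<in> P \<Longrightarrow> f p \<in> set p"
  shows "inj_on f P"
proof (rule inj_onI, rule ccontr)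
  fix p q assume pq: "p \<in> P" "q \<in> P" "f p = f q" "p \<noteq> q"
  then have "set p \<inter> set q = {}"
    using assms(1) unfolding disjoint_paths_def pairwise_def by blast
  with pq assms(2)[of p] assms(2)[of q] show False
    by auto
qed

lemma disjoint_paths_sublists:
  assumes "finite P" "disjoint_paths P" "\<And>p. p \<in> P \<Longrightarrow> \<exists>q. Q q \<and> q \<noteq> [] \<and> set q \<subseteq> set p"
  obtains P' where "finite P'" "card P' = card P" "\<forall>q\<in>P'. Q q" "disjoint_paths P'"
proof -
  define g where "g p = (SOME q. Q q \<and> q \<noteq> [] \<and> set q \<subseteq> set p)" for p
  have g: "Q (g p) \<and> g p \<noteq> [] \<and> set (g p) \<subseteq> set p" if "p \<in> P" for p
    unfolding g_def by (rule someI_ex) (rule assms(3)[OF that])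
  have disjoint: "set (g p) \<inter> set (g p') = {}" if "p \<in> P" "p' \<in> P" "p \<noteq> p'" for p p'
    using g[OF that(1)] g[OF that(2)] assms(2) that unfolding disjoint_paths_def pairwise_def
    by blast
  have "inj_on g P"
    using disjoint g by (fastforce simp: inj_on_def)
  moreover have "disjoint_paths (g ` P)"
    using disjoint unfolding disjoint_paths_def pairwise_def by blast
  ultimately show ?thesis
    using that[of "g ` P"] assms(1) g by (simp add: card_image)
qed

lemma has_disjoint_paths_trim_end:
  assumes "has_disjoint_paths V E A X k"
  obtains P where "finite P" "card P = k" "disjoint_paths P"
    "\<forall>p\<in>P. ab_path V E A X p \<and> set (butlast p) \<inter> X = {}"
proof -
  obtain P0 where P0: "finite P0" "card P0 = k" "\<forall>p\<in>P0. ab_path V E A X p" "disjoint_paths P0"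
    using assms unfolding has_disjoint_paths_def by blast
  have trimmed: "\<exists>q. (ab_path V E A X q \<and> set (butlast q) \<inter> X = {}) \<and> q \<noteq> [] \<and> set q \<subseteq> set p"
    if "p \<in> P0" for p
  proof -
    have p: "is_path V E p" "hd p \<in> A" "last p \<in> X"
      using P0(3) that by (auto simp: ab_path_def)
    then have "set p \<inter> X \<noteq> {}"
      by (metis disjoint_iff is_path_def last_in_set)
    then obtain q where "is_path V {(u, w) \<in> E. u \<notin> X} q" "hd q = hd p" "last q \<in> X"
      "set q \<subseteq> set p" "set (butlast q) \<inter> X = {}"
      by (rule is_path_first_entry[OF p(1)])
    with p show ?thesis
      by (intro exI[of _ q]) (auto simp: ab_path_def is_path_def)
  qed
  show ?thesis
    by (rule disjoint_paths_sublists[where Q = "\<lambda>q. ab_path V E A X q \<and> set (butlast q) \<inter> X = {}",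
          OF P0(1,4) trimmed]) (auto simp: P0(2) intro: that)
qed

lemma set_tl_rev: "set (tl (rev xs)) = set (butlast xs)"
  by (metis butlast_rev rev_rev_ident set_rev)

lemma has_disjoint_paths_trim_start:
  assumes "has_disjoint_paths V E X B k"
  obtains P where "finite P" "card P = k" "disjoint_paths P"
    "\<forall>p\<in>P. ab_path V E X B p \<and> set (tl p) \<inter> X = {}"
proof -
  obtain P where P: "finite P" "card P = k" "disjoint_paths P"
    "\<forall>p\<in>P. ab_path V (E\<inverse>) B X p \<and> set (butlast p) \<inter> X = {}"
  proof (rule has_disjoint_paths_trim_end)
    show "has_disjoint_paths V (E\<inverse>) B X k"
      using assms by (simp add: has_disjoint_paths_converse)
  qed
  have "\<forall>p\<in>rev ` P. ab_path V E X B p \<and> set (tl p) \<inter> X = {}"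
    using P(4) by (auto simp: ab_path_rev_converse set_tl_rev)
  with P show ?thesis
    by (intro that[of "rev ` P"]) (simp_all add: disjoint_paths_rev card_image)
qed

lemma separates_without_edge:
  assumes "separates V (E - {(x, y)}) A B S" "z = x \<or> z = y"
  shows "separates V E A B (insert z S)"
  unfolding separates_def
proof (intro allI impI notI)
  fix p assume p: "ab_path V E A B p" "set p \<inter> insert z S = {}"
  then have "is_path V (E - {(x, y)}) p"
    using assms(2) unfolding ab_path_def is_path_def by (auto dest: nth_mem)
  with p(1) have "ab_path V (E - {(x, y)}) A B p"
    by (simp add: ab_path_def)
  with assms(1) p(2) show False
    unfolding separates_def by blast
qed

lemma separators_at_least_first_entry:
  assumes "separators_at_least V E A B k" "separates V E A B X" "{(u, w) \<in> E. u \<notin> X} \<subseteq> E'"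
  shows "separators_at_least V E' A X k"
  unfolding separators_at_least_def
proof (intro allI impI)
  fix W assume W: "finite W" "separates V E' A X W"
  have "separates V E A B W"
    unfolding separates_def
  proof (intro allI impI notI)
    fix p assume p: "ab_path V E A B p" "set p \<inter> W = {}"
    with assms(2) have "set p \<inter> X \<noteq> {}"
      unfolding separates_def by blast
    then obtain q where q: "is_path V {(u, w) \<in> E. u \<notin> X} q" "hd q = hd p" "last q \<in> X"
      "set q \<subseteq> set p"
      by (rule is_path_first_entry[OF p(1)[unfolded ab_path_def, THEN conjunct1]])
    have "is_path V E' q"
      using is_path_mono[OF q(1) subset_refl assms(3)] .
    then have "ab_path V E' A X q"
      using q(2,3) p(1) by (simp add: ab_path_def)
    moreover have "set q \<inter> W = {}"
      using q(4) p(2) by blast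
    ultimately show False
      using W(2) unfolding separates_def by blast
  qed
  with W(1) assms(1) show "k \<le> card W"
    unfolding separators_at_least_def by blast
qed

lemma separators_at_least_converse:
  "separators_at_least V (E\<inverse>) B A k \<longleftrightarrow> separators_at_least V E A B k"
  by (simp add: separators_at_least_def separates_converse)

lemma separators_at_least_last_exit:
  assumes "separators_at_least V E A B k" "separates V E A B X" "{(u, w) \<in> E. w \<notin> X} \<subseteq> E'"
  shows "separators_at_least V E' X B k"
proof -
  have "separators_at_least V (E\<inverse>) B A k" "separates V (E\<inverse>) B A X"
    using assms(1,2) by (simp_all add: separators_at_least_converse separates_converse)
  moreover have "{(u, w) \<in> E\<inverse>. u \<notin> X} \<subseteq> E'\<inverse>"
    using assms(3) by auto
  ultimately have "separators_at_least V (E'\<inverse>) B X k"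
    by (rule separators_at_least_first_entry)
  then show ?thesis
    by (simp add: separators_at_least_converse)
qed

lemma separated_paths_meet_at_ends:
  assumes sep: "separates V E A B S"
    and p: "is_path V E p" "hd p \<in> A" "set (butlast p) \<inter> S = {}"
    and q: "is_path V E q" "last q \<in> B" "set (tl q) \<inter> S = {}"
    and v: "v \<in> set p" "v \<in> set q"
  shows "v \<in> S \<and> v = last p \<and> v = hd q"
proof -
  have "v \<in> S"
  proof (rule ccontr)
    assume "v \<notin> S"
    obtain ys zs us ws where p_split: "p = ys @ v # zs" and q_split: "q = us @ v # ws"
      using v by (meson split_list)
    have p1: "is_path V E (ys @ [v])"
      using is_path_take_drop(1)[OF p(1), of "Suc (length ys)"] p_split by simp
    have q2: "is_path V E (v # ws)"
      using is_path_take_drop(2)[OF q(1), of "length us"] q_split by simp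
    have "set ys \<subseteq> set (butlast p)" "set ws \<subseteq> set (tl q)"
      using p_split q_split by (auto simp: butlast_append tl_append split: list.split)
    then have avoid: "set (ys @ [v]) \<subseteq> V - S" "set (v # ws) \<subseteq> V - S"
      using p(1,3) q(1,3) \<open>v \<notin> S\<close> p_split q_split by (auto simp: is_path_def)
    \<comment> \<open>the initial part of p up to v followed by the final part of q from v avoids S\<close>
    then have "(hd p, v) \<in> (E \<inter> (V - S) \<times> (V - S))\<^sup>*" "(v, last q) \<in> (E \<inter> (V - S) \<times> (V - S))\<^sup>*"
      using is_path_rtrancl[OF p1] is_path_rtrancl[OF q2] p_split q_split
      by (auto simp: hd_append elim!: rtrancl_mono[THEN subsetD, rotated])
    then have reach: "(hd p, last q) \<in> (E \<inter> (V - S) \<times> (V - S))\<^sup>*"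
      by (rule rtrancl_trans)
    have "hd p \<in> V - S"
      using avoid(1) p_split by (cases ys) auto
    then obtain r where "is_path V E r" "hd r = hd p" "last r = last q" "set r \<subseteq> V - S"
      using rtrancl_is_path[OF reach _ Diff_subset] by blast
    with p(2) q(2) have "ab_path V E A B r" "set r \<inter> S = {}"
      by (auto simp: ab_path_def)
    with sep show False
      unfolding separates_def by blast
  qed
  moreover have "set p = insert (last p) (set (butlast p))"
    using p(1) by (induction p rule: rev_induct) (auto simp: is_path_def)
  moreover have "set q = insert (hd q) (set (tl q))"
    using q(1) by (cases q) (auto simp: is_path_def)
  ultimately show ?thesis
    using p(3) q(3) v by blast
qed

definition path_join :: "'a list \<Rightarrow> 'a list \<Rightarrow> 'a list" where
  "path_join p q = (if last p = hd q then p @ tl q else p @ q)"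

lemma path_join_ends:
  assumes "p \<noteq> []" "q \<noteq> []"
  shows "hd (path_join p q) = hd p" "last (path_join p q) = last q"
  using assms by (cases q; auto simp: path_join_def)+

lemma set_path_join: "set (path_join p q) \<subseteq> set p \<union> set q"
  by (cases q) (auto simp: path_join_def)

lemma is_path_join:
  assumes p: "is_path V E p" and q: "is_path V E q"
    and link: "last p = hd q \<or> (last p, hd q) \<in> E"
    and meet: "set p \<inter> set q \<subseteq> {last p} \<inter> {hd q}"
  shows "is_path V E (path_join p q)"
proof -
  have "p \<noteq> []"
    using p by (simp add: is_path_def)
  obtain b q' where q_cons: "q = b # q'"
    using q by (cases q) (auto simp: is_path_def)
  show ?thesis
  proof (cases "last p = b")
    case True
    show ?thesis
    proof (cases "q' = []")
      case False
      then have "is_path V E q'" "b \<notin> set q'" "(b, hd q') \<in> E"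
        using q q_cons by (auto simp: is_path_Cons)
      moreover have "set p \<inter> set q' = {}"
        using meet \<open>b \<notin> set q'\<close> q_cons by auto
      ultimately show ?thesis
        using True q_cons p \<open>p \<noteq> []\<close> False by (simp add: path_join_def is_path_append)
    qed (use True q_cons p in \<open>simp add: path_join_def\<close>)
  next
    case False
    then have "set p \<inter> set q = {}" "(last p, hd q) \<in> E"
      using meet link q_cons by auto
    then show ?thesis
      using False q_cons p q \<open>p \<noteq> []\<close> by (simp add: path_join_def is_path_append)
  qed
qed

lemma disjoint_paths_splice:
  assumes P: "disjoint_paths P" "\<forall>p\<in>P. p \<noteq> []" and Q: "disjoint_paths Q"
    and h: "inj_on h P" "h ` P \<subseteq> Q"
    and meet: "\<And>p q. p \<in> P \<Longrightarrow> q \<in> Q \<Longrightarrow> set p \<inter> set q \<noteq> {} \<Longrightarrow> q = h p"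
  shows "disjoint_paths ((\<lambda>p. path_join p (h p)) ` P)" "inj_on (\<lambda>p. path_join p (h p)) P"
proof -
  have disjoint: "set (path_join p (h p)) \<inter> set (path_join p' (h p')) = {}"
    if "p \<in> P" "p' \<in> P" "p \<noteq> p'" for p p'
  proof -
    have "set p \<inter> set p' = {}" "set (h p) \<inter> set (h p') = {}"
      using that P(1) Q h unfolding disjoint_paths_def pairwise_def inj_on_def by blast+
    moreover have "h p \<in> Q" "h p' \<in> Q"
      using that h(2) by auto
    then have "set p \<inter> set (h p') = {}" "set p' \<inter> set (h p) = {}"
      using meet[of p "h p'"] meet[of p' "h p"] that h(1) unfolding inj_on_def by metis+
    ultimately show ?thesis
      using set_path_join[of p "h p"] set_path_join[of p' "h p'"] by blast
  qed
  then show "disjoint_paths ((\<lambda>p. path_join p (h p)) ` P)"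
    unfolding disjoint_paths_def pairwise_def by blast
  show "inj_on (\<lambda>p. path_join p (h p)) P"
  proof (rule inj_onI, rule ccontr)
    fix p p' assume "p \<in> P" "p' \<in> P" "path_join p (h p) = path_join p' (h p')" "p \<noteq> p'"
    moreover have "path_join p (h p) \<noteq> []"
      using P(2) \<open>p \<in> P\<close> by (simp add: path_join_def)
    ultimately show False
      using disjoint by fastforce
  qed
qed

lemma disjoint_paths_image_eq:
  assumes "finite X" "card P = card X" "disjoint_paths P" "\<And>p. p \<in> P \<Longrightarrow> f p \<in> set p \<and> f p \<in> X"
  shows "f ` P = X"
proof -
  have "inj_on f P"
    using disjoint_paths_inj_on[OF assms(3)] assms(4) by blast
  then have "card (f ` P) = card X"
    using assms(2) by (simp add: card_image)
  then show ?thesis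
    using assms(1,4) by (metis card_subset_eq image_subsetI)
qed

lemma endpoint_matching:
  assumes "inj_on last P" "last ` P = insert x S" "hd ` Q = insert y S" "y \<notin> S"
  obtains h where "inj_on h P" "h ` P \<subseteq> Q"
    "\<And>p. p \<in> P \<Longrightarrow> hd (h p) = (if last p = x then y else last p)"
proof -
  define h where "h p = inv_into Q hd (if last p = x then y else last p)" for p
  have matched: "(if last p = x then y else last p) \<in> hd ` Q" if "p \<in> P" for p
    using that assms(2,3) by auto
  then have "h ` P \<subseteq> Q"
    unfolding h_def by (auto intro: inv_into_into)
  moreover have hd_h: "hd (h p) = (if last p = x then y else last p)" if "p \<in> P" for p
    unfolding h_def using matched[OF that] by (rule f_inv_into_f)
  moreover have "inj_on h P"
  proof (rule inj_onI)
    fix p p' assume "p \<in> P" "p' \<in> P" "h p = h p'"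
    then have "(if last p = x then y else last p) = (if last p' = x then y else last p')"
      using hd_h[OF \<open>p \<in> P\<close>] hd_h[OF \<open>p' \<in> P\<close>] by simp
    moreover have "last p \<in> insert x S" "last p' \<in> insert x S"
      using \<open>p \<in> P\<close> \<open>p' \<in> P\<close> assms(2) by auto
    ultimately have "last p = last p'"
      using assms(4) by (auto split: if_splits)
    with \<open>p \<in> P\<close> \<open>p' \<in> P\<close> assms(1) show "p = p'"
      by (simp add: inj_on_def)
  qed
  ultimately show ?thesis
    using that by blast
qed

lemma menger_splice:
  assumes sep: "separates V E' A B S" and "E' \<subseteq> E" "(x, y) \<in> E"
    and S: "finite S" "x \<notin> S" "y \<notin> S"
    and P: "finite P" "card P = card (insert x S)" "disjoint_paths P"
      "\<forall>p\<in>P. ab_path V E' A (insert x S) p \<and> set (butlast p) \<inter> insert x S = {}"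
    and Q: "card Q = card (insert y S)" "disjoint_paths Q"
      "\<forall>q\<in>Q. ab_path V E' (insert y S) B q \<and> set (tl q) \<inter> insert y S = {}"
  shows "has_disjoint_paths V E A B (card P)"
proof -
  have P_paths: "is_path V E' p" "p \<noteq> []" if "p \<in> P" for p
    using P(4) that by (auto simp: ab_path_def is_path_def)
  have Q_paths: "is_path V E' q" "q \<noteq> []" if "q \<in> Q" for q
    using Q(3) that by (auto simp: ab_path_def is_path_def)
  have inj_hd: "inj_on hd Q" and inj_last: "inj_on last P"
    using disjoint_paths_inj_on P(3) Q(2) P_paths(2) Q_paths(2) by (metis hd_in_set last_in_set)+
  have "last ` P = insert x S"
    using P S(1) P_paths(2) by (intro disjoint_paths_image_eq) (auto simp: ab_path_def)
  moreover have "hd ` Q = insert y S"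
    using Q S(1) Q_paths(2) by (intro disjoint_paths_image_eq) (auto simp: ab_path_def)
  ultimately obtain h where h: "inj_on h P" "h ` P \<subseteq> Q"
    "\<And>p. p \<in> P \<Longrightarrow> hd (h p) = (if last p = x then y else last p)"
    using endpoint_matching[OF inj_last _ _ S(3)] by blast
  have meet: "v \<in> S \<and> v = last p \<and> v = hd q"
    if "p \<in> P" "q \<in> Q" "v \<in> set p" "v \<in> set q" for p q v
    using separated_paths_meet_at_ends[OF sep, of p q v] P(4) Q(3) that by (auto simp: ab_path_def)
  have "q = h p" if pq: "p \<in> P" "q \<in> Q" and "set p \<inter> set q \<noteq> {}" for p q
  proof -
    obtain v where "v \<in> set p" "v \<in> set q"
      using \<open>set p \<inter> set q \<noteq> {}\<close> by blast
    with meet pq S(2) h(3) have "hd (h p) = hd q"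
      by auto
    with inj_hd h(2) pq show ?thesis
      by (auto simp: inj_on_def)
  qed
  then have "disjoint_paths ((\<lambda>p. path_join p (h p)) ` P)" "inj_on (\<lambda>p. path_join p (h p)) P"
    using disjoint_paths_splice[OF P(3) _ Q(2) h(1,2)] P_paths(2) by blast+
  moreover have "ab_path V E A B (path_join p (h p))" if "p \<in> P" for p
  proof -
    have "h p \<in> Q"
      using h(2) that by blast
    then have "is_path V E p" "is_path V E (h p)"
      using P_paths Q_paths that \<open>E' \<subseteq> E\<close> is_path_mono by blast+
    moreover have "last p = hd (h p) \<or> (last p, hd (h p)) \<in> E"
      using h(3)[OF that] \<open>(x, y) \<in> E\<close> by auto
    moreover have "set p \<inter> set (h p) \<subseteq> {last p} \<inter> {hd (h p)}"
      using meet[OF that \<open>h p \<in> Q\<close>] by blast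
    ultimately have "is_path V E (path_join p (h p))"
      by (rule is_path_join)
    then show ?thesis
      using P(4) Q(3) P_paths(2) Q_paths(2) \<open>h p \<in> Q\<close> that by (simp add: ab_path_def path_join_ends)
  qed
  ultimately show ?thesis
    unfolding has_disjoint_paths_def
    by (intro exI[of _ "(\<lambda>p. path_join p (h p)) ` P"]) (auto simp: card_image P(1))
qed

lemma has_disjoint_paths_mono:
  "has_disjoint_paths V E A B k \<Longrightarrow> E \<subseteq> E' \<Longrightarrow> has_disjoint_paths V E' A B k"
  unfolding has_disjoint_paths_def by (metis ab_path_mono)

lemma menger_no_edges:
  assumes "finite V" "separators_at_least V {} A B k"
  shows "has_disjoint_paths V {} A B k"
proof -
  have "separates V {} A B (A \<inter> B \<inter> V)"
    unfolding separates_def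
  proof (intro allI impI)
    fix p assume p: "ab_path V {} A B p"
    then obtain v where "p = [v]" "v \<in> V"
      by (cases p) (auto simp: ab_path_def is_path_Cons, simp add: is_path_def)
    with p show "set p \<inter> (A \<inter> B \<inter> V) \<noteq> {}"
      by (simp add: ab_path_def)
  qed
  then have "k \<le> card (A \<inter> B \<inter> V)"
    using assms unfolding separators_at_least_def by simp
  then obtain W where W: "W \<subseteq> A \<inter> B \<inter> V" "card W = k"
    by (meson obtain_subset_with_card_n)
  have "finite W"
    using W(1) assms(1) finite_subset by blast
  moreover have "card ((\<lambda>v. [v]) ` W) = k"
    using W(2) card_image[of "\<lambda>v. [v]" W] by (simp add: inj_on_def)
  moreover have "\<forall>p\<in>(\<lambda>v. [v]) ` W. ab_path V {} A B p"
    using W(1) by (auto simp: ab_path_def is_path_def)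
  moreover have "disjoint_paths ((\<lambda>v. [v]) ` W)"
    by (auto simp: disjoint_paths_def pairwise_def)
  ultimately show ?thesis
    unfolding has_disjoint_paths_def by blast
qed

text \<open>Goering's proof of Menger's theorem: unless deleting the edge xy keeps all A-B separators large,
  a separator S of G - xy with fewer than k vertices gives the separators S + x and S + y of G, both of
  size exactly k. By induction, G - xy contains k disjoint paths from A to S + x and k from S + y
  to B; they meet only in S, and spliced there and along xy they form k disjoint A-B paths of G.\<close>
lemma menger_step:
  assumes V: "finite V" "E \<subseteq> V \<times> V" and xy: "(x, y) \<in> E"
    and IH: "\<And>E' A B. card E' < card E \<Longrightarrow> E' \<subseteq> V \<times> V \<Longrightarrow>
      separators_at_least V E' A B k \<Longrightarrow> has_disjoint_paths V E' A B k"
    and sep: "separators_at_least V E A B k"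
  shows "has_disjoint_paths V E A B k"
proof -
  define E' where "E' = E - {(x, y)}"
  have "card E' < card E"
    unfolding E'_def using card_Diff1_less[OF finite_subset[OF V(2)] xy] V(1) by blast
  then have E': "card E' < card E" "card (E'\<inverse>) < card E" "E' \<subseteq> V \<times> V" "E'\<inverse> \<subseteq> V \<times> V"
    "E' \<subseteq> E"
    using V unfolding E'_def by auto
  show ?thesis
  proof (cases "separators_at_least V E' A B k")
    case True
    then show ?thesis
      using IH[OF E'(1,3)] E'(5) by (blast intro: has_disjoint_paths_mono)
  next
    case False
    then obtain S where S: "finite S" "separates V E' A B S" "card S < k"
      unfolding separators_at_least_def by (auto simp: not_le)
    have Sx: "separates V E A B (insert x S)" and Sy: "separates V E A B (insert y S)"
      using separates_without_edge[OF S(2)[unfolded E'_def]] by auto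
    then have "k \<le> card (insert x S)" "k \<le> card (insert y S)"
      using sep S(1) unfolding separators_at_least_def by auto
    then have xyS: "x \<notin> S" "y \<notin> S" "card (insert x S) = k" "card (insert y S) = k"
      using S(1,3) by (auto simp: card_insert_if split: if_splits)
    have "separators_at_least V E' A (insert x S) k"
      by (rule separators_at_least_first_entry[OF sep Sx]) (auto simp: E'_def)
    then have "has_disjoint_paths V E' A (insert x S) k"
      by (rule IH[OF E'(1,3)])
    then obtain P where P: "finite P" "card P = k" "disjoint_paths P"
      "\<forall>p\<in>P. ab_path V E' A (insert x S) p \<and> set (butlast p) \<inter> insert x S = {}"
      by (rule has_disjoint_paths_trim_end)
    have "separators_at_least V E' (insert y S) B k"
      by (rule separators_at_least_last_exit[OF sep Sy]) (auto simp: E'_def)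
    then have "has_disjoint_paths V E' (insert y S) B k"
      using IH[OF E'(2,4)] by (simp add: separators_at_least_converse has_disjoint_paths_converse)
    then obtain Q where Q: "card Q = k" "disjoint_paths Q"
      "\<forall>q\<in>Q. ab_path V E' (insert y S) B q \<and> set (tl q) \<inter> insert y S = {}"
      by (rule has_disjoint_paths_trim_start)
    show ?thesis
      using menger_splice[OF S(2) E'(5) xy S(1) xyS(1,2) P(1) _ P(3,4) _ Q(2,3)] P(2) Q(1) xyS(3,4)
      by simp
  qed
qed

theorem menger:
  assumes "finite V" "E \<subseteq> V \<times> V" "separators_at_least V E A B k"
  shows "has_disjoint_paths V E A B k"
  using assms(2,3)
proof (induction "card E" arbitrary: E A B rule: less_induct)
  case less
  show ?case
  proof (cases "E = {}")
    case True
    then show ?thesis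
      using menger_no_edges[OF assms(1)] less.prems(2) by simp
  next
    case False
    then obtain x y where "(x, y) \<in> E"
      by auto
    then show ?thesis
      using menger_step[OF assms(1) less.prems(1)] less.hyps less.prems(2) by blast
  qed
qed

section \<open>Source components and Condition 1\<close>

lemma source_component_subset:
  assumes "source_component (reduced_vertices V F) (reduced_edges E F F1) S"
  shows "S \<subseteq> V - F" "S \<noteq> {}"
  using assms unfolding source_component_def scc_def reduced_vertices_def by auto

lemma source_component_in_edge:
  assumes "source_component (reduced_vertices V F) (reduced_edges E F F1) S"
    and "i \<in> V - F - S" "j \<in> S" "(i, j) \<in> E"
  shows "i \<in> F1"
proof (rule ccontr)
  assume "i \<notin> F1"
  with assms(2-4) source_component_subset(1)[OF assms(1)]
  have "(i, j) \<in> (reduced_edges E F F1)\<^sup>*"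
    unfolding reduced_edges_def by blast
  with assms(1-3) show False
    unfolding source_component_def reduced_vertices_def by blast
qed

lemma not_reaches_if_sources_within:
  assumes "finite Z" "card Z \<le> f" "{i \<in> X. \<exists>j \<in> Y. (i, j) \<in> E} \<subseteq> Z"
  shows "\<not> reaches E f X Y"
  using card_mono[OF assms(1,3)] assms(2) unfolding reaches_def by simp

lemma condition1_three_sets:
  assumes "condition1 V E f" "F \<subseteq> V" "card F \<le> f"
    and "S \<subseteq> V - F" "R \<subseteq> V - F - S" "S \<noteq> {}" "R \<noteq> {}"
  shows "reaches E f (S \<union> (V - F - S - R)) R \<or> reaches E f (R \<union> (V - F - S - R)) S"
proof -
  define C where "C = V - F - S - R"
  have "S \<union> C \<union> R \<union> F = V \<and> S \<inter> C = {} \<and> S \<inter> R = {} \<and> S \<inter> F = {} \<and> C \<inter> R = {} \<and>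
      C \<inter> F = {} \<and> R \<inter> F = {} \<and> S \<noteq> {} \<and> R \<noteq> {} \<and> card F \<le> f"
    using assms(2-7) unfolding C_def by auto
  then have "reaches E f (S \<union> C) R \<or> reaches E f (R \<union> C) S"
    by (rule assms(1)[unfolded condition1_def, THEN spec, THEN spec, THEN spec, THEN spec, THEN mp])
  then show ?thesis
    unfolding C_def .
qed

definition reach_within :: "('a \<times> 'a) set \<Rightarrow> 'a set \<Rightarrow> 'a set \<Rightarrow> 'a set" where
  "reach_within E X B = {v \<in> X. \<exists>b \<in> B. (v, b) \<in> (E \<inter> X \<times> X)\<^sup>*}"

lemma reach_within_target: "b \<in> X \<Longrightarrow> b \<in> B \<Longrightarrow> b \<in> reach_within E X B"
  unfolding reach_within_def by blast

lemma reach_within_pred: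
  "i \<in> X \<Longrightarrow> (i, j) \<in> E \<Longrightarrow> j \<in> reach_within E X B \<Longrightarrow> i \<in> reach_within E X B"
  unfolding reach_within_def by (blast intro: converse_rtrancl_into_rtrancl)

lemma separates_reach_within:
  assumes "separates U (E \<inter> U \<times> U) A B W"
  shows "reach_within E (U - W) B \<inter> A = {}"
proof (rule ccontr)
  assume "reach_within E (U - W) B \<inter> A \<noteq> {}"
  then obtain a b where a: "a \<in> A" "a \<in> U - W" "b \<in> B" "(a, b) \<in> (E \<inter> (U - W) \<times> (U - W))\<^sup>*"
    unfolding reach_within_def by blast
  moreover have "(E \<inter> U \<times> U) \<inter> (U - W) \<times> (U - W) = E \<inter> (U - W) \<times> (U - W)"
    by blast
  ultimately have "\<exists>r. is_path U (E \<inter> U \<times> U) r \<and> hd r = a \<and> last r = b \<and> set r \<subseteq> U - W"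
    using rtrancl_is_path[of a b "E \<inter> U \<times> U" "U - W" U] by simp
  then obtain r where "ab_path U (E \<inter> U \<times> U) A B r" "set r \<inter> W = {}"
    using a(1,3) unfolding ab_path_def by blast
  with assms show False
    unfolding separates_def by blast
qed

lemma source_component_separators_at_least:
  assumes "condition1 V E f" "F \<subseteq> V" "card F \<le> f" "finite F1" "card F1 \<le> f"
    and src: "source_component (reduced_vertices V F) (reduced_edges E F F1) S"
    and y: "y \<in> V - F - S"
  shows "separators_at_least (V - F - {y}) (E \<inter> (V - F - {y}) \<times> (V - F - {y})) S
    {u \<in> V - F - {y}. (u, y) \<in> E} (f + 1)"
  unfolding separators_at_least_def
proof (intro allI impI)
  let ?U = "V - F - {y}" and ?B = "{u \<in> V - F - {y}. (u, y) \<in> E}"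
  fix W assume W: "finite W" "separates ?U (E \<inter> ?U \<times> ?U) S ?B W"
  show "f + 1 \<le> card W"
  proof (rule ccontr)
    assume "\<not> f + 1 \<le> card W"
    define R where "R = insert y (reach_within E (?U - W) ?B)"
    define C where "C = V - F - S - R"
    have S: "S \<subseteq> V - F" "S \<noteq> {}"
      using source_component_subset[OF src] .
    have R: "R \<subseteq> V - F - S" "R \<noteq> {}"
      using y separates_reach_within[OF W(2)] unfolding R_def reach_within_def by auto
    have "i \<in> W" if "i \<in> S \<union> C" "j \<in> R" "(i, j) \<in> E" for i j
    proof (rule ccontr)
      assume "i \<notin> W"
      with that(1) S(1) R(1) have "i \<in> ?U - W"
        unfolding C_def R_def by auto
      with that(2,3) have "i \<in> R"
        unfolding R_def by (auto intro: reach_within_pred reach_within_target)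
      with that(1) R(1) show False
        unfolding C_def by blast
    qed
    then have "\<not> reaches E f (S \<union> C) R"
      using W(1) \<open>\<not> f + 1 \<le> card W\<close> by (intro not_reaches_if_sources_within) auto
    moreover have "{i \<in> R \<union> C. \<exists>j \<in> S. (i, j) \<in> E} \<subseteq> F1"
      using source_component_in_edge[OF src] R(1) unfolding C_def by blast
    then have "\<not> reaches E f (R \<union> C) S"
      using assms(4,5) by (rule not_reaches_if_sources_within[rotated 2])
    ultimately show False
      using condition1_three_sets[OF assms(1-3) S(1) R(1) S(2) R(2)] unfolding C_def by blast
  qed
qed

lemma robust_paths_through_in_neighbours:
  assumes y: "y \<in> V - F" "y \<notin> S"
    and paths: "has_disjoint_paths (V - F - {y}) (E \<inter> (V - F - {y}) \<times> (V - F - {y})) S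
      {u \<in> V - F - {y}. (u, y) \<in> E} k"
  shows "\<exists>P. finite P \<and> card P \<ge> k \<and> (\<forall>p\<in>P. Xy_path_excl V E S y F p) \<and>
    (\<forall>p\<in>P. \<forall>q\<in>P. p \<noteq> q \<longrightarrow> set p \<inter> set q = {y})"
proof -
  obtain P where P: "finite P" "card P = k" "disjoint_paths P"
    "\<forall>p\<in>P. ab_path (V - F - {y}) (E \<inter> (V - F - {y}) \<times> (V - F - {y})) S
      {u \<in> V - F - {y}. (u, y) \<in> E} p"
    using paths unfolding has_disjoint_paths_def by blast
  have "Xy_path_excl V E S y F (p @ [y])" if "p \<in> P" for p
  proof -
    have p: "is_path V E p" "set p \<subseteq> V - F - {y}" "hd p \<in> S" "(last p, y) \<in> E"
      using P(4) that is_path_mono[of "V - F - {y}" _ p V E]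
      by (auto simp: ab_path_def is_path_def)
    moreover have "is_path V E [y]"
      using y by (simp add: is_path_def)
    moreover have "p \<noteq> []" "set p \<inter> set [y] = {}"
      using p(1,2) by (auto simp: is_path_def)
    ultimately have "is_path V E (p @ [y])"
      by (simp add: is_path_append)
    with p y show ?thesis
      by (auto simp: Xy_path_excl_def is_path_def)
  qed
  moreover have "set (p @ [y]) \<inter> set (q @ [y]) = {y}" if "p \<in> P" "q \<in> P" "p \<noteq> q" for p q
    using that P(3) unfolding disjoint_paths_def pairwise_def by auto
  ultimately show ?thesis
    using P(1,2) by (intro exI[of _ "(\<lambda>p. p @ [y]) ` P"]) (auto simp: card_image inj_on_def)
qed

theorem corollary2:
  fixes V :: "'a set" and E :: "('a \<times> 'a) set" and f :: nat and F F1 S :: "'a set"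
  assumes "simple_digraph V E"
    and "condition1 V E f"
    and "F \<subseteq> V" and "F1 \<subseteq> V - F"
    and "card F \<le> f" and "card F1 \<le> f"
    and "source_component (reduced_vertices V F) (reduced_edges E F F1) S"
  shows "robust_reach V E f F S (V - F - S)"
  unfolding robust_reach_def
proof (intro disjI2 ballI)
  fix y assume y: "y \<in> V - F - S"
  have "finite V" "E \<subseteq> V \<times> V"
    using assms(1) by (auto simp: simple_digraph_def)
  moreover have "finite F1"
    using assms(4) \<open>finite V\<close> finite_subset by blast
  ultimately have "has_disjoint_paths (V - F - {y}) (E \<inter> (V - F - {y}) \<times> (V - F - {y})) S
      {u \<in> V - F - {y}. (u, y) \<in> E} (f + 1)"
    using source_component_separators_at_least[OF assms(2,3,5) _ assms(6,7) y]
    by (intro menger) auto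
  then show "\<exists>P. finite P \<and> f + 1 \<le> card P \<and> (\<forall>p\<in>P. Xy_path_excl V E S y F p) \<and>
      (\<forall>p\<in>P. \<forall>q\<in>P. p \<noteq> q \<longrightarrow> set p \<inter> set q = {y})"
    using y by (intro robust_paths_through_in_neighbours) auto
qed

end
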